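(* Let $f:E\to E'$ be an FD-homomorphism between two Feller-Dynkin processes with state spaces $E$ and $E'$. Let $R$ be the equivalence relation on $E\uplus E'$ given by \[ R=\{(x,y)\in E\times E : f(x)=f(y)\}\cup\{(x,y),(y,x) : x\in E,\ y\in E',\ f(x)=y\}\cup\{(y,y'):y,y'\in E',\ y=y'\}. \] Then $R$ is a bisimulation between the two Feller-Dynkin processes.
   Context: A Feller-Dynkin (FD) process consists of: a locally compact Hausdorff space $E$ with countable base and Borel $\sigma$-algebra; its one-point compactification $E_\partial=E\uplus\{\partial\}$; a strongly continuous semigroup $(\hat P_t)_{t\ge0}$ on $C_0(E)$ with $0\le f\le1\Rightarrow0\le\hat P_tf\le1$, with associated sub-Markov kernels $P_t$ ($\hat P_tf(x)=\int f(y)P_t(x,dy)$); the set $\Omega$ of trajectories (cadlag $\omega:[0,\infty)\to E_\partial$ such that $\omega(t-)=\partial$ or $\omega(t)=\partial$ implies $\omega(u)=\partial$ for all $u\ge t$) with $\mathcal{G}=\sigma(\omega\mapsto\omega(s): s\ge0)$; the probability measures $\mathbb{P}^x$ on $(\Omega,\mathcal{G})$, $x\in E_\partial$, uniquely determined by $\mathbb{P}^x(\omega(0)\in dx_0,\omega(t_1)\in dx_1,\dots,\omega(t_n)\in dx_n)=\delta_x(dx_0)P^{+\partial}_{t_1}(x_0,dx_1)\cdots P^{+\partial}_{t_n-t_{n-1}}(x_{n-1},dx_n)$, where $P^{+\partial}_t(x,\{\partial\})=1-P_t(x,E)$, $P^{+\partial}_t(\partial,\{\partial\})=1$; and a map $obs:E\to2^{AP}$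 ($AP$ finite set of atomic propositions), with $obs(\partial)=\partial$. Given FD processes $(E,\Omega,\mathcal{G},\mathbb{P}^x,obs)$ and $(E',\Omega',\mathcal{G}',\mathbb{P}'^{x},obs')$, an FD-homomorphism is a continuous map $f:E\to E'$ (extended by $f(\partial)=\partial$) such that $obs=obs'\circ f$ and for all $x\in E$ and all $B'\in\mathcal{G}'$, $\mathbb{P}'^{f(x)}(B')=\mathbb{P}^x(\{\omega\in\Omega: f\circ\omega\in B'\})$. Given two FD processes with data indexed by $1,2$ (state spaces $E_1,E_2$, trajectory spaces $\Omega_1,\Omega_2$, $\sigma$-algebras $\mathcal{G}_1,\mathcal{G}_2$, measures $\mathbb{P}^x_1,\mathbb{P}^x_2$, maps $obs_1,obs_2$), a bisimulation between them is an equivalence relation $R$ on $E_1\uplus E_2$ such that whenever $x\,R\,y$ with $x\in E_i$, $y\in E_j$: (i) $obs_i(x)=obs_j(y)$; (ii) for all $B_1\in\mathcal{G}_1$, $B_2\in\mathcal{G}_2$ satisfying "for all $k,l\in\{1,2\}$, all $\omega_k\in B_k$ and all $\omega_l\in\Omega_l$, if $\omega_k(t)\,R\,\omega_l(t)$ for all $t\ge0$ ($\partial$ related to itself) then $\omega_l\in B_l$", we have $\mathbb{P}^x_i(B_i)=\mathbb{P}^y_j(B_j)$. *)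

theory Defs
  imports "HOL-Analysis.Analysis" "HOL-Probability.Probability"
begin

section \<open>One-point compactification E_\<partial> = E + {\<partial>}, with \<partial> represented by None\<close>

definition alexandroff :: "('e::topological_space) option topology" where
  "alexandroff = topology_generated_by
     ({Some ` U | U. open U} \<union> {insert None (Some ` (- K)) | K. compact K})"

definition opt_borel :: "('e::topological_space) option measure" where
  "opt_borel = sigma (topspace alexandroff) {U. openin alexandroff U}"

definition C0 :: "('e::topological_space \<Rightarrow> real) set" where
  "C0 = {g. continuous_on UNIV g \<and>
            (\<forall>e>0. \<exists>K. compact K \<and> (\<forall>x. x \<notin> K \<longrightarrow> \<bar>g x\<bar> < e))}"

definition semigroup_op :: "(real \<Rightarrow> 'e \<Rightarrow> 'e measure) \<Rightarrow> real \<Rightarrow> ('e \<Rightarrow> real) \<Rightarrow> 'e \<Rightarrow> real" where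
  "semigroup_op P t g x = (\<integral>y. g y \<partial>(P t x))"

text \<open>Trajectories are defined on [0,\<infinity>); as functions on the reals we use the convention
  that they are constant (equal to the value at 0) on the negative reals.\<close>
definition trajectories :: "(real \<Rightarrow> ('e::topological_space) option) set" where
  "trajectories = {\<omega>.
     (\<forall>t<0. \<omega> t = \<omega> 0) \<and>
     (\<forall>t\<ge>0. limitin alexandroff \<omega> (\<omega> t) (at t within {t<..})) \<and>
     (\<forall>t>0. \<exists>l. limitin alexandroff \<omega> l (at t within {..<t})) \<and>
     (\<forall>t\<ge>0. (\<omega> t = None \<or> (t > 0 \<and> limitin alexandroff \<omega> None (at t within {..<t})))
              \<longrightarrow> (\<forall>u\<ge>t. \<omega> u = None))}"

definition traj_sigma :: "(real \<Rightarrow> ('e::topological_space) option) measure" where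
  "traj_sigma = sigma trajectories
     {{\<omega> \<in> trajectories. \<omega> s \<in> A} | s A. s \<ge> 0 \<and> A \<in> sets opt_borel}"

definition pplus_int :: "(real \<Rightarrow> 'e \<Rightarrow> 'e measure) \<Rightarrow> real \<Rightarrow> 'e option \<Rightarrow> ('e option \<Rightarrow> ennreal) \<Rightarrow> ennreal" where
  "pplus_int P t z g = (case z of
      None \<Rightarrow> g None
    | Some x \<Rightarrow> (\<integral>\<^sup>+ y. g (Some y) \<partial>(P t x)) + (1 - emeasure (P t x) (space (P t x))) * g None)"

text \<open>Iterated kernel: list of (time increment, set).\<close>
primrec fdd :: "(real \<Rightarrow> 'e \<Rightarrow> 'e measure) \<Rightarrow> 'e option \<Rightarrow> (real \<times> 'e option set) list \<Rightarrow> ennreal" where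
  "fdd P z [] = 1"
| "fdd P z (dA # rest) = pplus_int P (fst dA) z (\<lambda>w. indicator (snd dA) w * fdd P w rest)"

definition FD_process ::
  "(real \<Rightarrow> ('e::{t2_space, second_countable_topology}) \<Rightarrow> 'e measure)
   \<Rightarrow> ('e option \<Rightarrow> (real \<Rightarrow> 'e option) measure) \<Rightarrow> ('e \<Rightarrow> ('ap::finite) set) \<Rightarrow> bool" where
  "FD_process P Pr obs \<longleftrightarrow>
     locally_compact_space (euclidean :: 'e topology) \<and>
     \<comment> \<open>sub-Markov kernels on the Borel sets of E\<close>
     (\<forall>t\<ge>0. \<forall>x. subprob_space (P t x) \<and> sets (P t x) = sets (borel :: 'e measure)) \<and>
     (\<forall>t\<ge>0. \<forall>A \<in> sets (borel :: 'e measure). (\<lambda>x. emeasure (P t x) A) \<in> borel_measurable borel) \<and>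
     \<comment> \<open>the associated operators form a strongly continuous semigroup on C_0(E)\<close>
     (\<forall>t\<ge>0. \<forall>g\<in>C0. semigroup_op P t g \<in> C0) \<and>
     (\<forall>g\<in>C0. semigroup_op P 0 g = g) \<and>
     (\<forall>s\<ge>0. \<forall>t\<ge>0. \<forall>g\<in>C0. semigroup_op P (s + t) g = semigroup_op P s (semigroup_op P t g)) \<and>
     (\<forall>g\<in>C0. \<forall>t\<ge>0. \<forall>e>0. \<exists>d>0. \<forall>s\<ge>0. \<bar>s - t\<bar> < d \<longrightarrow>
         (\<forall>x. \<bar>semigroup_op P s g x - semigroup_op P t g x\<bar> < e)) \<and>
     (\<forall>t\<ge>0. \<forall>g\<in>C0. (\<forall>x. 0 \<le> g x \<and> g x \<le> 1) \<longrightarrow>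
         (\<forall>x. 0 \<le> semigroup_op P t g x \<and> semigroup_op P t g x \<le> 1)) \<and>
     \<comment> \<open>path measures on (\<Omega>, G)\<close>
     (\<forall>z. prob_space (Pr z) \<and> space (Pr z) = trajectories \<and> sets (Pr z) = sets traj_sigma) \<and>
     \<comment> \<open>finite-dimensional distributions, 0 < t_1 < ... < t_n\<close>
     (\<forall>z A0 ts As. sorted_wrt (<) (0 # ts) \<longrightarrow> length As = length ts \<longrightarrow>
         A0 \<in> sets opt_borel \<longrightarrow> set As \<subseteq> sets opt_borel \<longrightarrow>
         emeasure (Pr z) {\<omega> \<in> trajectories. \<omega> 0 \<in> A0 \<and> (\<forall>i<length ts. \<omega> (ts ! i) \<in> As ! i)}
           = indicator A0 z * fdd P z (zip (map2 (-) ts (0 # ts)) As))"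

text \<open>Observations: obs(\<partial>) = \<partial>, i.e. the extension to E_\<partial> is map_option obs.\<close>

definition FD_homomorphism ::
  "(real \<Rightarrow> ('e::{t2_space, second_countable_topology}) \<Rightarrow> 'e measure)
   \<Rightarrow> ('e option \<Rightarrow> (real \<Rightarrow> 'e option) measure) \<Rightarrow> ('e \<Rightarrow> ('ap::finite) set)
   \<Rightarrow> (real \<Rightarrow> ('e'::{t2_space, second_countable_topology}) \<Rightarrow> 'e' measure)
   \<Rightarrow> ('e' option \<Rightarrow> (real \<Rightarrow> 'e' option) measure) \<Rightarrow> ('e' \<Rightarrow> 'ap set)
   \<Rightarrow> ('e \<Rightarrow> 'e') \<Rightarrow> bool" where
  "FD_homomorphism P Pr obs P' Pr' obs' f \<longleftrightarrow>
     FD_process P Pr obs \<and> FD_process P' Pr' obs' \<and>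
     continuous_on UNIV f \<and>
     (\<forall>x. obs x = obs' (f x)) \<and>
     (\<forall>x. \<forall>B' \<in> sets (Pr' (Some (f x))).
        {\<omega> \<in> space (Pr (Some x)). map_option f \<circ> \<omega> \<in> B'} \<in> sets (Pr (Some x)) \<and>
        emeasure (Pr' (Some (f x))) B' = emeasure (Pr (Some x)) {\<omega> \<in> space (Pr (Some x)). map_option f \<circ> \<omega> \<in> B'})"

definition traj_rel :: "('a + 'b) rel \<Rightarrow> (real \<Rightarrow> ('a + 'b) option) \<Rightarrow> (real \<Rightarrow> ('a + 'b) option) \<Rightarrow> bool" where
  "traj_rel R \<omega> \<omega>' \<longleftrightarrow> (\<forall>t\<ge>0. rel_option (\<lambda>u v. (u, v) \<in> R) (\<omega> t) (\<omega>' t))"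

definition R_closed ::
  "('a + 'b) rel \<Rightarrow> (real \<Rightarrow> 'a option) set \<Rightarrow> (real \<Rightarrow> 'b option) set
   \<Rightarrow> (real \<Rightarrow> 'a option) set \<Rightarrow> (real \<Rightarrow> 'b option) set \<Rightarrow> bool" where
  "R_closed R \<Omega>1 \<Omega>2 B1 B2 \<longleftrightarrow>
     (\<forall>\<omega>\<in>B1. (\<forall>\<omega>'\<in>\<Omega>1. traj_rel R (map_option Inl \<circ> \<omega>) (map_option Inl \<circ> \<omega>') \<longrightarrow> \<omega>' \<in> B1) \<and>
              (\<forall>\<omega>'\<in>\<Omega>2. traj_rel R (map_option Inl \<circ> \<omega>) (map_option Inr \<circ> \<omega>') \<longrightarrow> \<omega>' \<in> B2)) \<and>
     (\<forall>\<omega>\<in>B2. (\<forall>\<omega>'\<in>\<Omega>1. traj_rel R (map_option Inr \<circ> \<omega>) (map_option Inl \<circ> \<omega>') \<longrightarrow> \<omega>' \<in> B1) \<and>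
              (\<forall>\<omega>'\<in>\<Omega>2. traj_rel R (map_option Inr \<circ> \<omega>) (map_option Inr \<circ> \<omega>') \<longrightarrow> \<omega>' \<in> B2))"

definition bisimulation ::
  "(real \<Rightarrow> ('a::{t2_space, second_countable_topology}) \<Rightarrow> 'a measure)
   \<Rightarrow> ('a option \<Rightarrow> (real \<Rightarrow> 'a option) measure) \<Rightarrow> ('a \<Rightarrow> ('ap::finite) set)
   \<Rightarrow> (real \<Rightarrow> ('b::{t2_space, second_countable_topology}) \<Rightarrow> 'b measure)
   \<Rightarrow> ('b option \<Rightarrow> (real \<Rightarrow> 'b option) measure) \<Rightarrow> ('b \<Rightarrow> 'ap set)
   \<Rightarrow> ('a + 'b) rel \<Rightarrow> bool" where
  "bisimulation P1 Pr1 obs1 P2 Pr2 obs2 R \<longleftrightarrow>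
     FD_process P1 Pr1 obs1 \<and> FD_process P2 Pr2 obs2 \<and>
     equiv UNIV R \<and>
     (\<forall>(u, v) \<in> R.
        case_sum obs1 obs2 u = case_sum obs1 obs2 v \<and>
        (\<forall>B1 \<in> sets traj_sigma. \<forall>B2 \<in> sets traj_sigma.
           R_closed R trajectories trajectories B1 B2 \<longrightarrow>
           case_sum (\<lambda>x. emeasure (Pr1 (Some x)) B1) (\<lambda>y. emeasure (Pr2 (Some y)) B2) u
           = case_sum (\<lambda>x. emeasure (Pr1 (Some x)) B1) (\<lambda>y. emeasure (Pr2 (Some y)) B2) v))"

definition hom_relation :: "('a \<Rightarrow> 'b) \<Rightarrow> ('a + 'b) rel" where
  "hom_relation f =
     {(Inl x, Inl y) | x y. f x = f y} \<union>
     {(Inl x, Inr y) | x y. f x = y} \<union> {(Inr y, Inl x) | x y. f x = y} \<union>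
     {(Inr y, Inr y') | y y'. y = y'}"

end

theory Submission
  imports Defs
begin

text \<open>A trajectory \<omega> of the first process is pointwise related to its image f \<circ> \<omega>. Hence
  for an R-closed pair (B1, B2), \<omega> lies in B1 exactly when f \<circ> \<omega> lies in B2, as long as
  f \<circ> \<omega> is again a trajectory. The homomorphism property applied to the whole trajectory
  space shows that this holds almost surely, so P^x(B1) equals the image measure of B2,
  which is P'^{f(x)}(B2). Since R is the kernel of f + id, this settles every related pair.\<close>

lemma hom_relation_eq_kernel: "hom_relation f = kernel (case_sum f id)"
proof (intro set_eqI iffI; clarify)
  fix u v
  show "(u, v) \<in> hom_relation f" if "(u, v) \<in> kernel (case_sum f id)"
    using that by (cases u; cases v) (auto simp: hom_relation_def kernel_def)
qed (auto simp: hom_relation_def kernel_def)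

lemma traj_rel_hom_relation_image:
  "traj_rel (hom_relation f) (map_option Inl \<circ> \<omega>) (map_option Inr \<circ> (map_option f \<circ> \<omega>))"
  "traj_rel (hom_relation f) (map_option Inr \<circ> (map_option f \<circ> \<omega>)) (map_option Inl \<circ> \<omega>)"
  unfolding traj_rel_def hom_relation_def
  by (auto split: option.split simp: option.rel_map option.rel_refl)

lemma R_closed_hom_relation_iff:
  assumes "R_closed (hom_relation f) trajectories trajectories B1 B2"
    and "\<omega> \<in> trajectories" and "map_option f \<circ> \<omega> \<in> trajectories"
  shows "\<omega> \<in> B1 \<longleftrightarrow> map_option f \<circ> \<omega> \<in> B2"
  using assms traj_rel_hom_relation_image[of f \<omega>] unfolding R_closed_def by blast

lemma FD_homomorphism_AE_image_trajectory:
  assumes hom: "FD_homomorphism P Pr obs P' Pr' obs' f"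
  shows "AE \<omega> in Pr (Some x). map_option f \<circ> \<omega> \<in> trajectories"
proof -
  let ?M = "Pr (Some x)" and ?M' = "Pr' (Some (f x))"
  let ?S = "{\<omega> \<in> space ?M. map_option f \<circ> \<omega> \<in> space ?M'}"
  interpret M: prob_space ?M
    using hom unfolding FD_homomorphism_def FD_process_def by auto
  interpret M': prob_space ?M'
    using hom unfolding FD_homomorphism_def FD_process_def by auto
  have "?S \<in> sets ?M \<and> emeasure ?M' (space ?M') = emeasure ?M ?S"
    using hom sets.top[of ?M'] unfolding FD_homomorphism_def by blast
  then have "?S \<in> sets ?M" "emeasure ?M ?S = 1"
    using M'.emeasure_space_1 by auto
  then have "AE \<omega> in ?M. \<omega> \<in> ?S"
    by (intro M.AE_prob_1) (simp add: M.emeasure_eq_measure)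
  moreover have "space ?M' = trajectories"
    using hom unfolding FD_homomorphism_def FD_process_def by auto
  ultimately show ?thesis by (auto elim: AE_mp)
qed

lemma FD_homomorphism_emeasure_R_closed:
  assumes hom: "FD_homomorphism P Pr obs P' Pr' obs' f"
    and B1: "B1 \<in> sets traj_sigma" and B2: "B2 \<in> sets traj_sigma"
    and closed: "R_closed (hom_relation f) trajectories trajectories B1 B2"
  shows "emeasure (Pr (Some x)) B1 = emeasure (Pr' (Some (f x))) B2"
proof -
  let ?M = "Pr (Some x)" and ?M' = "Pr' (Some (f x))"
  let ?preimage = "{\<omega> \<in> space ?M. map_option f \<circ> \<omega> \<in> B2}"
  have space: "space ?M = trajectories" "space ?M' = trajectories"
    and sets: "sets ?M = sets traj_sigma" "sets ?M' = sets traj_sigma"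
    using hom unfolding FD_homomorphism_def FD_process_def by auto
  have image: "?preimage \<in> sets ?M" "emeasure ?M' B2 = emeasure ?M ?preimage"
    using hom B2 sets unfolding FD_homomorphism_def by auto
  have "AE \<omega> in ?M. \<omega> \<in> B1 \<longleftrightarrow> \<omega> \<in> ?preimage"
    using FD_homomorphism_AE_image_trajectory[OF hom, of x]
  proof (rule AE_mp, intro AE_I2 impI)
    fix \<omega> assume "\<omega> \<in> space ?M" "map_option f \<circ> \<omega> \<in> trajectories"
    then show "\<omega> \<in> B1 \<longleftrightarrow> \<omega> \<in> ?preimage"
      using R_closed_hom_relation_iff[OF closed] space by auto
  qed
  then have "emeasure ?M B1 = emeasure ?M ?preimage"
    using B1 image(1) sets by (intro emeasure_eq_AE) auto
  with image(2) show ?thesis by simp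
qed

lemma FD_homomorphism_emeasure_R_closed_sum:
  assumes "FD_homomorphism P Pr obs P' Pr' obs' f"
    and "B1 \<in> sets traj_sigma" and "B2 \<in> sets traj_sigma"
    and "R_closed (hom_relation f) trajectories trajectories B1 B2"
  shows "case_sum (\<lambda>x. emeasure (Pr (Some x)) B1) (\<lambda>y. emeasure (Pr' (Some y)) B2) u
    = emeasure (Pr' (Some (case_sum f id u))) B2"
  using FD_homomorphism_emeasure_R_closed[OF assms] by (cases u) auto

theorem mainTheorem4:
  fixes P :: "real \<Rightarrow> ('e::{t2_space, second_countable_topology}) \<Rightarrow> 'e measure"
    and Pr :: "'e option \<Rightarrow> (real \<Rightarrow> 'e option) measure"
    and obs :: "'e \<Rightarrow> ('ap::finite) set"
    and P' :: "real \<Rightarrow> ('e'::{t2_space, second_countable_topology}) \<Rightarrow> 'e' measure"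
    and Pr' :: "'e' option \<Rightarrow> (real \<Rightarrow> 'e' option) measure"
    and obs' :: "'e' \<Rightarrow> 'ap set"
    and f :: "'e \<Rightarrow> 'e'"
  assumes "FD_homomorphism P Pr obs P' Pr' obs' f"
  shows "bisimulation P Pr obs P' Pr' obs' (hom_relation f)"
proof -
  have "FD_process P Pr obs" "FD_process P' Pr' obs'" and "\<And>x. obs x = obs' (f x)"
    using assms unfolding FD_homomorphism_def by auto
  moreover from this(3) have "case_sum obs obs' u = obs' (case_sum f id u)" for u
    by (cases u) auto
  moreover have "equiv UNIV (hom_relation f)"
    by (simp add: hom_relation_eq_kernel equiv_kernel)
  moreover have "case_sum f id u = case_sum f id v" if "(u, v) \<in> hom_relation f" for u v
    using that by (simp add: hom_relation_eq_kernel kernel_def)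
  ultimately show ?thesis
    unfolding bisimulation_def by (auto simp: FD_homomorphism_emeasure_R_closed_sum[OF assms])
qed

end
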